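(* Suppose Assumptions 1 and 2 hold, and let $\rho>2\mathcal{D}_{Z_\star}+1$, $\alpha>0$, $\beta\in(0,1)$. Let $\Omega_0,\Omega_t\in\mathcal{X}_0$ with $F(\Omega_t)\le F(\Omega_0)$, let $\bar W_t\in\mathbb{S}^n_+$ with $\operatorname{tr}(\bar W_t)=1$ and $P_t\in\mathbb{R}^{n\times r}$ with $P_t^\top P_t=I_r$. Let $(W_t^\star,y_t^\star)$ be a minimizer of $$\min_{W\in\hat{\mathcal W}(\bar W_t,P_t),\,y\in\mathbb{R}^m}\ \langle W-C,\Omega_t\rangle-\langle b-\mathcal{A}(\Omega_t),y\rangle+\tfrac{1}{2\alpha}\|W-C+\mathcal{A}^*(y)\|^2,$$ and let $\Omega_{t+1}:=\Omega_t+\frac1\alpha(W_t^\star-C+\mathcal{A}^*(y_t^\star))$. Assume the descent condition $$\beta\big(F(\Omega_t)-\hat F_{(\bar W_t,P_t)}(\Omega_{t+1})\big)\le F(\Omega_t)-F(\Omega_{t+1})$$ holds. Let $X^\star\in\mathcal{P}^\star$ and $e_t:=F(\Omega_t)-F(X^\star)$, and let $\mathcal{D}_{\Omega_0}:=\sup\{\|X\|: X\in\mathcal{X}_0,\ F(X)\le F(\Omega_0)\}$. Then: 1. $\mathcal{A}(\Omega_{t+1})=b$ and $\lambda_{\min}(\Omega_{t+1})\ge -e_t/(\mathcal{D}_{Z_\star}+1)$; 2. $W_t^\star\succeq0$ and $\|W_t^\star-C+\mathcal{A}^*(y_t^\star)\|^2\le\frac{2\alpha}{\beta}e_t$; 3.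 $-\frac{\rho\, e_t}{\mathcal{D}_{Z_\star}+1}-\mathcal{D}_{\Omega_0}\sqrt{\frac{2\alpha}{\beta}e_t}\ \le\ \langle C,\Omega_{t+1}\rangle-b^\top y_t^\star\ \le\ \frac{1-\beta}{\beta}e_t+\mathcal{D}_{\Omega_0}\sqrt{\frac{2\alpha}{\beta}e_t}.$
   Context: Data: $b\in\mathbb{R}^m$, $C,A_1,\dots,A_m\in\mathbb{S}^n$; $\langle X,Y\rangle=\operatorname{tr}(XY)$, $\|\cdot\|$ the Frobenius norm; $\mathcal{A}(X)=(\langle A_i,X\rangle)_{i=1}^m$, $\mathcal{A}^*(y)=\sum_iy_iA_i$. Primal SDP (P): $\min\langle C,X\rangle$ s.t. $\mathcal{A}(X)=b$, $X\succeq0$; dual SDP (D): $\max b^\top y$ s.t. $Z+\mathcal{A}^*(y)=C$, $Z\succeq0$. $\mathcal{P}^\star,\mathcal{D}^\star$: optimal solution sets of (P), (D). Assumption 1: $A_i$ linearly independent. Assumption 2: (P) and (D) strictly feasible. $\mathcal{D}_{Z_\star}:=\max_{(y^\star,Z^\star)\in\mathcal{D}^\star}\operatorname{tr}(Z^\star)$. $\mathcal{X}_0:=\{X\in\mathbb{S}^n:\mathcal{A}(X)=b\}$. Penalized objective $F(X):=\langle C,X\rangle+\rho\max\{\lambda_{\max}(-X),0\}$. For $\bar W\succeq0$ with $\operatorname{tr}\bar W=1$ and $P$ with orthonormal columns ($r$ of them): $\hat{\mathcal W}(\bar W,P):=\{\gamma\bar W+PSP^\top: S\in\mathbb{S}^r_+,\gamma\ge0,\gamma+\operatorname{tr}(S)\le\rho\}$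 and $\hat F_{(\bar W,P)}(X):=\langle C,X\rangle+\max_{W\in\hat{\mathcal W}(\bar W,P)}\langle W,-X\rangle$. (By the paper's Proposition 4.1, $\Omega_{t+1}$ is the minimizer of $\hat F_{(\bar W_t,P_t)}(X)+\frac\alpha2\|X-\Omega_t\|^2$ over $\mathcal{X}_0$.) *)

theory Defs
  imports "HOL-Analysis.Analysis"
begin

definition sym_mat :: "real^'n^'n \<Rightarrow> bool" where
  "sym_mat X \<longleftrightarrow> transpose X = X"

definition psd :: "real^'n^'n \<Rightarrow> bool" where
  "psd X \<longleftrightarrow> sym_mat X \<and> (\<forall>v. 0 \<le> v \<bullet> (X *v v))"

definition pd :: "real^'n^'n \<Rightarrow> bool" where
  "pd X \<longleftrightarrow> sym_mat X \<and> (\<forall>v. v \<noteq> 0 \<longrightarrow> 0 < v \<bullet> (X *v v))"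

definition frob :: "real^'n^'n \<Rightarrow> real^'n^'n \<Rightarrow> real" where
  "frob X Y = trace (X ** Y)"

definition fnorm :: "real^'n^'n \<Rightarrow> real" where
  "fnorm X = sqrt (\<Sum>i\<in>UNIV. \<Sum>j\<in>UNIV. (X $ i $ j)^2)"

definition eigvals :: "real^'n^'n \<Rightarrow> real set" where
  "eigvals X = {c. \<exists>v. v \<noteq> 0 \<and> X *v v = c *\<^sub>R v}"

definition lambda_max :: "real^'n^'n \<Rightarrow> real" where
  "lambda_max X = Max (eigvals X)"

definition lambda_min :: "real^'n^'n \<Rightarrow> real" where
  "lambda_min X = Min (eigvals X)"

definition opA :: "('m::finite \<Rightarrow> real^'n^'n) \<Rightarrow> real^'n^'n \<Rightarrow> real^'m" where
  "opA A X = (\<chi> i. frob (A i) X)"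

definition opAadj :: "('m::finite \<Rightarrow> real^'n^'n) \<Rightarrow> real^'m \<Rightarrow> real^'n^'n" where
  "opAadj A y = (\<Sum>i\<in>UNIV. (y $ i) *\<^sub>R A i)"

definition assumption1 :: "('m::finite \<Rightarrow> real^'n^'n) \<Rightarrow> bool" where
  "assumption1 A \<longleftrightarrow> (\<forall>c::real^'m. opAadj A c = 0 \<longrightarrow> c = 0)"

definition assumption2 :: "('m::finite \<Rightarrow> real^'n^'n) \<Rightarrow> real^'m \<Rightarrow> real^'n^'n \<Rightarrow> bool" where
  "assumption2 A b C \<longleftrightarrow>
     (\<exists>X. opA A X = b \<and> pd X) \<and> (\<exists>y Z. Z + opAadj A y = C \<and> pd Z)"

definition primal_feas :: "('m::finite \<Rightarrow> real^'n^'n) \<Rightarrow> real^'m \<Rightarrow> (real^'n^'n) set" where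
  "primal_feas A b = {X. opA A X = b \<and> psd X}"

definition primal_opt :: "('m::finite \<Rightarrow> real^'n^'n) \<Rightarrow> real^'m \<Rightarrow> real^'n^'n \<Rightarrow> (real^'n^'n) set" where
  "primal_opt A b C = {X \<in> primal_feas A b. \<forall>X' \<in> primal_feas A b. frob C X \<le> frob C X'}"

definition dual_feas :: "('m::finite \<Rightarrow> real^'n^'n) \<Rightarrow> real^'n^'n \<Rightarrow> ((real^'m) \<times> (real^'n^'n)) set" where
  "dual_feas A C = {(y, Z). Z + opAadj A y = C \<and> psd Z}"

definition dual_opt :: "('m::finite \<Rightarrow> real^'n^'n) \<Rightarrow> real^'m \<Rightarrow> real^'n^'n \<Rightarrow> ((real^'m) \<times> (real^'n^'n)) set" where
  "dual_opt A b C = {(y, Z) \<in> dual_feas A C. \<forall>(y', Z') \<in> dual_feas A C. b \<bullet> y' \<le> b \<bullet> y}"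

definition DZstar :: "('m::finite \<Rightarrow> real^'n^'n) \<Rightarrow> real^'m \<Rightarrow> real^'n^'n \<Rightarrow> real" where
  "DZstar A b C = Sup ((\<lambda>(y, Z). trace Z) ` dual_opt A b C)"

definition X0 :: "('m::finite \<Rightarrow> real^'n^'n) \<Rightarrow> real^'m \<Rightarrow> (real^'n^'n) set" where
  "X0 A b = {X. sym_mat X \<and> opA A X = b}"

definition Fpen :: "real^'n^'n \<Rightarrow> real \<Rightarrow> real^'n^'n \<Rightarrow> real" where
  "Fpen C \<rho> X = frob C X + \<rho> * max (lambda_max (- X)) 0"

definition What :: "real \<Rightarrow> real^'n^'n \<Rightarrow> real^'r^'n \<Rightarrow> (real^'n^'n) set" where
  "What \<rho> Wb P = {\<gamma> *\<^sub>R Wb + P ** S ** transpose P | \<gamma> S.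
       psd S \<and> \<gamma> \<ge> 0 \<and> \<gamma> + trace S \<le> \<rho>}"

definition Fhat :: "real^'n^'n \<Rightarrow> real \<Rightarrow> real^'n^'n \<Rightarrow> real^'r^'n \<Rightarrow> real^'n^'n \<Rightarrow> real" where
  "Fhat C \<rho> Wb P X = frob C X + Sup ((\<lambda>W. frob W (- X)) ` What \<rho> Wb P)"

definition subobj :: "('m::finite \<Rightarrow> real^'n^'n) \<Rightarrow> real^'m \<Rightarrow> real^'n^'n \<Rightarrow> real
     \<Rightarrow> real^'n^'n \<Rightarrow> real^'n^'n \<Rightarrow> real^'m \<Rightarrow> real" where
  "subobj A b C \<alpha> \<Omega> W y = frob (W - C) \<Omega> - (b - opA A \<Omega>) \<bullet> y
      + (1 / (2 * \<alpha>)) * (fnorm (W - C + opAadj A y))^2"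

definition DOmega :: "('m::finite \<Rightarrow> real^'n^'n) \<Rightarrow> real^'m \<Rightarrow> real^'n^'n \<Rightarrow> real \<Rightarrow> real^'n^'n \<Rightarrow> real" where
  "DOmega A b C \<rho> \<Omega>0 = Sup (fnorm ` {X \<in> X0 A b. Fpen C \<rho> X \<le> Fpen C \<rho> \<Omega>0})"

end

theory Submission
  imports Defs
begin

text \<open>
  Write \<open>G = W* - C + A*(y*)\<close>, so that \<open>\<Omega>_{t+1} = \<Omega>_t + G/\<alpha>\<close>.
  Stationarity of the subproblem in \<open>y\<close> gives \<open>A(G) = 0\<close>, hence \<open>\<Omega>_{t+1} \<in> X_0\<close>;
  the variational inequality in \<open>W\<close> shows that \<open>W*\<close> attains the maximum defining
  \<open>Fhat(\<Omega>_{t+1})\<close>, whence \<open>F(\<Omega>_t) - Fhat(\<Omega>_{t+1}) \<ge> |G|^2/\<alpha>\<close>, and the descent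
  condition turns this into \<open>F(\<Omega>_t) - F(\<Omega>_{t+1}) \<ge> \<beta> |G|^2/\<alpha>\<close>.

  Slater's condition yields, through a separating hyperplane, a dual solution \<open>(y, Z)\<close> with
  \<open>b\<bullet>y = \<langle>C, X*\<rangle>\<close> and \<open>tr Z \<le> D_Z*\<close>. Pairing \<open>Z\<close> with the psd matrix
  \<open>X + neg_part X \<cdot> I\<close> shows that the penalty is exact:
  \<open>F(X) \<ge> F(X*) + (\<rho> - tr Z) neg_part X\<close> on \<open>X_0\<close>. With the descent this bounds both
  \<open>neg_part \<Omega>_{t+1}\<close> and \<open>|G|^2\<close> by multiples of \<open>e_t\<close>. Finally
  \<open>\<langle>C, \<Omega>_{t+1}\<rangle> - b\<bullet>y* = \<langle>W*, \<Omega>_{t+1}\<rangle> - \<langle>G, \<Omega>_{t+1}\<rangle>\<close>: the first term lies in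
  \<open>[-\<rho> neg_part \<Omega>_{t+1}, 0]\<close>, and the second is controlled by Cauchy-Schwarz, since the
  sublevel sets of \<open>F\<close> on \<open>X_0\<close> are bounded by the dual Slater point.
\<close>

section \<open>Symmetric and positive semidefinite matrices\<close>

lemma sym_mat_iff: "sym_mat X \<longleftrightarrow> (\<forall>i j. X$i$j = X$j$i)"
  unfolding sym_mat_def transpose_def vec_eq_iff by auto

lemma sym_mat_add [intro]: "sym_mat X \<Longrightarrow> sym_mat Y \<Longrightarrow> sym_mat (X + Y)"
  and sym_mat_diff [intro]: "sym_mat X \<Longrightarrow> sym_mat Y \<Longrightarrow> sym_mat (X - Y)"
  and sym_mat_scaleR [intro]: "sym_mat X \<Longrightarrow> sym_mat (c *\<^sub>R X)"
  and sym_mat_uminus [intro]: "sym_mat X \<Longrightarrow> sym_mat (- X)"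
  and sym_mat_mat [intro]: "sym_mat (mat k :: real^'n^'n)"
  by (auto simp: sym_mat_iff mat_def)

lemma sym_mat_sum [intro]:
  "(\<And>i. i \<in> I \<Longrightarrow> sym_mat (f i)) \<Longrightarrow> sym_mat (\<Sum>i\<in>I. f i :: real^'n^'n)"
  by (induction I rule: infinite_finite_induct) (auto simp: sym_mat_iff)

lemma frob_commute: "frob X Y = frob Y X"
  unfolding frob_def by (rule trace_mul_sym)

lemma frob_eq_inner: assumes "sym_mat Y" shows "frob X Y = inner X Y"
proof -
  have "frob X Y = (\<Sum>i\<in>UNIV. \<Sum>k\<in>UNIV. X$i$k * Y$k$i)"
    by (simp add: frob_def trace_def matrix_matrix_mult_def)
  also have "\<dots> = inner X Y"
    using assms by (simp add: sym_mat_iff inner_vec_def)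
  finally show ?thesis .
qed

lemma fnorm_eq_norm: "fnorm X = norm X"
  unfolding fnorm_def norm_vec_def L2_set_def by (simp add: sum_nonneg)

lemma sym_mat_inner_mult: assumes "sym_mat X" shows "(X *v u) \<bullet> w = u \<bullet> (X *v w)"
  using assms unfolding sym_mat_def by (metis vector_transpose_matrix dot_lmul_matrix)

lemma uminus_matrix_vector_mult: "(- X) *v w = - (X *v (w::real^'n))"
  by (simp add: matrix_vector_mult_def vec_eq_iff sum_negf)

lemma subspace_matrix_kernel: "subspace {u. (X::real^'n^'m) *v u = 0}"
  unfolding subspace_def by (auto simp: matrix_vector_right_distrib matrix_vector_mult_scaleR)

lemma mat_1_scaleR_mult: "(c *\<^sub>R mat 1) *v (w::real^'n) = c *\<^sub>R w"
  by (metis scaleR_matrix_vector_assoc matrix_vector_mul_lid)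

lemma inner_mat_1: "inner X (mat 1) = trace (X::real^'n^'n)"
  by (simp add: mat_def inner_vec_def trace_def if_distrib cong: if_cong)

definition outer :: "real^'n \<Rightarrow> real^'n^'n" where
  "outer v = (\<chi> i j. v$i * v$j)"

lemma outer_mult_vec: "outer v *v w = (v \<bullet> w) *\<^sub>R v"
  by (simp add: outer_def matrix_vector_mult_def inner_vec_def vec_eq_iff sum_distrib_left mult_ac)

lemma inner_outer: "inner X (outer v) = v \<bullet> (X *v v)"
  by (simp add: outer_def matrix_vector_mult_def inner_vec_def sum_distrib_left mult_ac)

lemma sym_mat_outer: "sym_mat (outer v)"
  by (simp add: sym_mat_iff outer_def mult.commute)

lemma psd_outer: "psd (outer v)"
  unfolding psd_def using sym_mat_outer by (simp add: outer_mult_vec inner_commute)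

lemma psd_add [intro]: "psd X \<Longrightarrow> psd Y \<Longrightarrow> psd (X + Y)"
  by (auto simp: psd_def matrix_vector_mult_add_rdistrib inner_add_right)

lemma psd_scaleR [intro]: "psd X \<Longrightarrow> c \<ge> 0 \<Longrightarrow> psd (c *\<^sub>R X)"
  by (auto simp: psd_def scaleR_matrix_vector_assoc[symmetric])

lemma psd_zero [intro]: "psd (0::real^'n^'n)"
  by (simp add: psd_def sym_mat_iff)

lemma psd_mat_1 [intro]: "psd (mat 1 :: real^'n^'n)"
  by (simp add: psd_def sym_mat_mat)

lemma trace_scaleR: "trace (c *\<^sub>R (X::real^'n^'n)) = c * trace X"
  by (simp add: trace_def sum_distrib_left)

lemma matrix_add_rdistrib: "((X::real^'m^'n) + Y) ** Z = X ** Z + Y ** Z"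
  by (simp add: matrix_matrix_mult_def vec_eq_iff sum.distrib distrib_right)

lemma psd_congruence:
  fixes P :: "real^'r^'n"
  assumes "psd S"
  shows "psd (P ** S ** transpose P)"
proof -
  have "transpose S = S" using assms by (simp add: psd_def sym_mat_def)
  hence "sym_mat (P ** S ** transpose P)"
    by (simp add: sym_mat_def matrix_transpose_mul matrix_mul_assoc)
  moreover have "v \<bullet> ((P ** S ** transpose P) *v v) = (transpose P *v v) \<bullet> (S *v (transpose P *v v))" for v
    by (simp add: matrix_vector_mul_assoc[symmetric] dot_lmul_matrix[symmetric])
  ultimately show ?thesis using assms by (simp add: psd_def)
qed

lemma trace_orthonormal_congruence:
  fixes P :: "real^'r^'n"
  assumes "transpose P ** P = mat 1"
  shows "trace (P ** S ** transpose P) = trace S"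
  by (metis assms matrix_mul_assoc matrix_mul_lid trace_mul_sym)

section \<open>Extreme eigenvalues\<close>

lemma linear_coeff_nonneg_if_quadratic_nonneg_near_0:
  fixes a c :: real
  assumes "c \<ge> 0" and quad: "\<And>s. 0 < s \<Longrightarrow> s \<le> 1 \<Longrightarrow> 0 \<le> s*a + s^2*c"
  shows "a \<ge> 0"
proof (rule ccontr)
  assume "\<not> a \<ge> 0"
  define s where "s = min 1 (-a/(2*c+1))"
  have "a/(2*c+1) < 0" using \<open>\<not> a \<ge> 0\<close> assms(1) by (intro divide_neg_pos) auto
  hence s: "0 < s" "s \<le> 1" by (auto simp: s_def)
  have "s*c \<le> (-a/(2*c+1))*c" using assms(1) by (intro mult_right_mono) (auto simp: s_def)
  also have "\<dots> < -a/2" using \<open>\<not> a \<ge> 0\<close> assms(1) by (simp add: field_simps)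
  finally have "s*(a + s*c) < 0" using \<open>\<not> a \<ge> 0\<close> s by (intro mult_pos_neg) auto
  with quad[OF s] show False by (simp add: algebra_simps power2_eq_square)
qed

lemma linear_coeff_eq_0_if_quadratic_nonneg:
  fixes a c :: real
  assumes "c \<ge> 0" and quad: "\<And>t. 0 \<le> 2*t*a + t^2*c"
  shows "a = 0"
proof -
  have "2*a \<ge> 0"
    by (rule linear_coeff_nonneg_if_quadratic_nonneg_near_0[OF assms(1)]) (use quad in \<open>simp add: mult_ac\<close>)
  moreover have "-2*a \<ge> 0"
    by (rule linear_coeff_nonneg_if_quadratic_nonneg_near_0[OF assms(1)]) (use quad[of "-_"] in \<open>simp add: mult_ac\<close>)
  ultimately show ?thesis by simp
qed

lemma psd_quadratic_form_eq_0D: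
  fixes Y :: "real^'n^'n"
  assumes Y: "psd Y" and v: "v \<bullet> (Y *v v) = 0"
  shows "Y *v v = 0"
proof -
  have "w \<bullet> (Y *v v) = 0" for w
  proof (rule linear_coeff_eq_0_if_quadratic_nonneg)
    show "0 \<le> w \<bullet> (Y *v w)" using Y by (simp add: psd_def)
    fix t :: real
    have "0 \<le> (v + t *\<^sub>R w) \<bullet> (Y *v (v + t *\<^sub>R w))" using Y by (simp add: psd_def)
    also have "\<dots> = v \<bullet> (Y *v v) + t * (v \<bullet> (Y *v w)) + t * (w \<bullet> (Y *v v)) + t^2 * (w \<bullet> (Y *v w))"
      by (simp add: power2_eq_square algebra_simps)
    also have "v \<bullet> (Y *v w) = w \<bullet> (Y *v v)"
      using Y sym_mat_inner_mult[of Y v w] by (simp add: psd_def inner_commute)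
    finally show "0 \<le> 2*t*(w \<bullet> (Y *v v)) + t^2*(w \<bullet> (Y *v w))" using v by simp
  qed
  thus ?thesis by (metis inner_eq_zero_iff)
qed

lemma quadratic_form_max_on_sphere:
  fixes X :: "real^'n^'n"
  shows "\<exists>v. norm v = 1 \<and> (\<forall>w. w \<bullet> (X *v w) \<le> (v \<bullet> (X *v v)) * (w \<bullet> w))"
proof -
  have cont: "continuous_on (sphere 0 1) (\<lambda>w::real^'n. w \<bullet> (X *v w))"
    by (intro continuous_intros continuous_on_compose2[OF matrix_vector_mult_linear_continuous_on]) auto
  have "sphere (0::real^'n) 1 \<noteq> {}"
    by (simp add: sphere_def) (metis norm_Basis SOME_Basis)
  then obtain v where v: "v \<in> sphere 0 1" "\<forall>u\<in>sphere 0 1. u \<bullet> (X *v u) \<le> v \<bullet> (X *v v)"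
    using continuous_attains_sup[OF compact_sphere _ cont] by blast
  have "w \<bullet> (X *v w) \<le> (v \<bullet> (X *v v)) * (w \<bullet> w)" for w
  proof (cases "w = 0")
    case False
    define u where "u = (1/norm w) *\<^sub>R w"
    have "u \<in> sphere 0 1" using False by (simp add: u_def)
    hence "u \<bullet> (X *v u) \<le> v \<bullet> (X *v v)" using v by blast
    moreover have "u \<bullet> (X *v u) = (w \<bullet> (X *v w)) / (w \<bullet> w)"
      by (simp add: u_def matrix_vector_mult_scaleR power2_norm_eq_inner[symmetric] field_simps
          power2_eq_square)
    ultimately show ?thesis using False by (simp add: divide_le_eq)
  qed simp
  thus ?thesis using v by auto
qed

lemma finite_eigvals:
  fixes X :: "real^'n^'n"
  assumes "sym_mat X"
  shows "finite (eigvals X)"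
proof -
  define f where "f c = (SOME u. u \<noteq> 0 \<and> X *v u = c *\<^sub>R u)" for c
  have f: "f c \<noteq> 0 \<and> X *v f c = c *\<^sub>R f c" if "c \<in> eigvals X" for c
    unfolding f_def by (rule someI_ex) (use that in \<open>auto simp: eigvals_def\<close>)
  have inj: "inj_on f (eigvals X)"
  proof (rule inj_onI)
    fix c d assume cd: "c \<in> eigvals X" "d \<in> eigvals X" "f c = f d"
    have "c *\<^sub>R f c = d *\<^sub>R f c" using f[OF cd(1)] f[OF cd(2)] cd(3) by metis
    thus "c = d" using f[OF cd(1)] by simp
  qed
  have "pairwise orthogonal (f ` eigvals X)"
  proof (clarsimp simp: pairwise_def)
    fix c d assume cd: "c \<in> eigvals X" "d \<in> eigvals X" "f c \<noteq> f d"
    have "c * (f c \<bullet> f d) = (X *v f c) \<bullet> f d" using f[OF cd(1)] by simp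
    also have "\<dots> = f c \<bullet> (X *v f d)" by (rule sym_mat_inner_mult[OF assms])
    also have "\<dots> = d * (f c \<bullet> f d)" using f[OF cd(2)] by simp
    finally have "(c - d) * (f c \<bullet> f d) = 0" by (simp add: algebra_simps)
    thus "orthogonal (f c) (f d)" using cd(3) by (auto simp: orthogonal_def)
  qed
  hence "independent (f ` eigvals X)"
    by (rule pairwise_orthogonal_independent) (use f in force)
  hence "finite (f ` eigvals X)" using independent_bound by blast
  thus ?thesis using inj by (rule finite_imageD)
qed

lemma top_eigval_exists:
  fixes X :: "real^'n^'n"
  assumes "sym_mat X"
  obtains l where "l \<in> eigvals X" "\<And>w. w \<bullet> (X *v w) \<le> l * (w \<bullet> w)"
proof -
  obtain v where v: "norm v = 1" "\<forall>w. w \<bullet> (X *v w) \<le> (v \<bullet> (X *v v)) * (w \<bullet> w)"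
    using quadratic_form_max_on_sphere by blast
  define l where "l = v \<bullet> (X *v v)"
  define Y where "Y = l *\<^sub>R mat 1 - X"
  have Y_mult: "Y *v w = l *\<^sub>R w - X *v w" for w
    by (simp add: Y_def matrix_vector_mult_diff_rdistrib mat_1_scaleR_mult)
  have "sym_mat Y" using assms by (auto simp: Y_def)
  hence "psd Y" using v(2) by (simp add: psd_def Y_mult inner_diff_right l_def)
  moreover have "v \<bullet> v = 1" using v(1) by (simp add: norm_eq_sqrt_inner)
  ultimately have "Y *v v = 0"
    by (intro psd_quadratic_form_eq_0D) (simp_all add: Y_mult inner_diff_right l_def)
  hence "l \<in> eigvals X" using v(1) unfolding eigvals_def by (intro CollectI exI[of _ v]) (auto simp: Y_mult)
  thus thesis using v(2) l_def by (intro that) auto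
qed

lemma
  fixes X :: "real^'n^'n"
  assumes "sym_mat X"
  shows lambda_max_in_eigvals: "lambda_max X \<in> eigvals X"
    and quadratic_form_le_lambda_max: "w \<bullet> (X *v w) \<le> lambda_max X * (w \<bullet> w)"
proof -
  obtain l where l: "l \<in> eigvals X" "\<And>w. w \<bullet> (X *v w) \<le> l * (w \<bullet> w)"
    using top_eigval_exists[OF assms] by metis
  have le_l: "c \<le> l" if c: "c \<in> eigvals X" for c
  proof -
    obtain u where u: "u \<noteq> 0" "X *v u = c *\<^sub>R u" using c unfolding eigvals_def by blast
    have "c * (u \<bullet> u) \<le> l * (u \<bullet> u)" using l(2)[of u] u(2) by simp
    moreover have "u \<bullet> u > 0" using u(1) by simp
    ultimately show ?thesis by (rule mult_right_le_imp_le)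
  qed
  have "lambda_max X = l"
    unfolding lambda_max_def by (rule Max_eqI[OF finite_eigvals[OF assms] le_l l(1)])
  thus "lambda_max X \<in> eigvals X" "w \<bullet> (X *v w) \<le> lambda_max X * (w \<bullet> w)"
    using l(1) l(2)[of w] by simp_all
qed

definition neg_part :: "real^'n^'n \<Rightarrow> real" where
  "neg_part X = max (lambda_max (- X)) 0"

lemma neg_part_nonneg: "0 \<le> neg_part X"
  by (simp add: neg_part_def)

lemma Fpen_eq: "sym_mat C \<Longrightarrow> Fpen C \<rho> X = inner C X + \<rho> * neg_part X"
  by (simp add: Fpen_def neg_part_def frob_commute[of C] frob_eq_inner inner_commute)

lemma quadratic_form_ge_neg_part:
  assumes "sym_mat X"
  shows "- neg_part X * (w \<bullet> w) \<le> w \<bullet> (X *v w)"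
proof -
  have "w \<bullet> ((- X) *v w) \<le> lambda_max (- X) * (w \<bullet> w)"
    using assms by (intro quadratic_form_le_lambda_max) auto
  also have "\<dots> \<le> neg_part X * (w \<bullet> w)"
    by (intro mult_right_mono) (auto simp: neg_part_def)
  finally show ?thesis by (simp add: uminus_matrix_vector_mult)
qed

lemma psd_add_neg_part:
  fixes X :: "real^'n^'n"
  assumes "sym_mat X"
  shows "psd (X + neg_part X *\<^sub>R mat 1)"
proof -
  have "0 \<le> w \<bullet> ((X + neg_part X *\<^sub>R mat 1) *v w)" for w
    using quadratic_form_ge_neg_part[OF assms, of w]
    by (simp add: matrix_vector_mult_add_rdistrib mat_1_scaleR_mult inner_add_right)
  thus ?thesis using assms by (auto simp: psd_def)
qed

lemma neg_part_eq_0_if_psd: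
  assumes "psd X"
  shows "neg_part X = 0"
proof -
  have "sym_mat (- X)" using assms by (simp add: psd_def sym_mat_uminus)
  hence "lambda_max (- X) \<in> eigvals (- X)" by (rule lambda_max_in_eigvals)
  then obtain v where v: "v \<noteq> 0" "(- X) *v v = lambda_max (- X) *\<^sub>R v"
    unfolding eigvals_def by blast
  have "lambda_max (- X) * (v \<bullet> v) = - (v \<bullet> (X *v v))"
    using v(2) by (simp add: uminus_matrix_vector_mult flip: inner_minus_right)
  also have "\<dots> \<le> 0 * (v \<bullet> v)" using assms by (simp add: psd_def)
  finally have "lambda_max (- X) * (v \<bullet> v) \<le> 0 * (v \<bullet> v)" .
  moreover have "0 < v \<bullet> v" using v(1) by simp
  ultimately have "lambda_max (- X) \<le> 0" by (rule mult_right_le_imp_le)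
  thus ?thesis by (simp add: neg_part_def)
qed

lemma lambda_min_ge_neg_part:
  assumes "sym_mat X"
  shows "- neg_part X \<le> lambda_min X"
proof -
  have "- neg_part X \<le> c" if c: "c \<in> eigvals X" for c
  proof -
    obtain u where u: "u \<noteq> 0" "X *v u = c *\<^sub>R u" using c unfolding eigvals_def by blast
    have "- neg_part X * (u \<bullet> u) \<le> c * (u \<bullet> u)"
      using quadratic_form_ge_neg_part[OF assms, of u] u(2) by simp
    moreover have "u \<bullet> u > 0" using u(1) by simp
    ultimately show ?thesis by (rule mult_right_le_imp_le)
  qed
  moreover have "eigvals X \<noteq> {}" using lambda_max_in_eigvals[OF assms] by blast
  ultimately show ?thesis
    unfolding lambda_min_def using finite_eigvals[OF assms] by simp
qed

section \<open>Self-duality of the semidefinite cone\<close>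

lemma psd_deflate:
  fixes X :: "real^'n^'n"
  assumes X: "psd X" and u: "u \<bullet> u = 1" "X *v u = l *\<^sub>R u"
  shows "psd (X - l *\<^sub>R outer u)"
  unfolding psd_def
proof (intro conjI allI)
  have sX: "sym_mat X" using X by (simp add: psd_def)
  thus "sym_mat (X - l *\<^sub>R outer u)" using sym_mat_outer by auto
  fix w :: "real^'n"
  define a where "a = u \<bullet> w"
  have uXw: "u \<bullet> (X *v w) = l * a"
    using sym_mat_inner_mult[OF sX, of u w] u(2) by (simp add: a_def)
  have "w \<bullet> ((X - l *\<^sub>R outer u) *v w) = (w - a *\<^sub>R u) \<bullet> (X *v (w - a *\<^sub>R u))"
    using uXw u by (simp add: scaleR_matrix_vector_assoc[symmetric] outer_mult_vec
        inner_commute a_def power2_eq_square algebra_simps)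
  also have "\<dots> \<ge> 0" using X by (simp add: psd_def)
  finally show "0 \<le> w \<bullet> ((X - l *\<^sub>R outer u) *v w)" .
qed

lemma psd_inner_nonneg:
  fixes Z X :: "real^'n^'n"
  assumes Z: "psd Z" and X: "psd X"
  shows "0 \<le> inner Z X"
  using X
proof (induction "DIM(real^'n) - dim {u. X *v u = 0}" arbitrary: X rule: less_induct)
  \<comment> \<open>Deflating the top eigenpair keeps \<open>X\<close> psd and strictly enlarges its kernel.\<close>
  case less
  have sX: "sym_mat X" using less.prems by (simp add: psd_def)
  define l where "l = lambda_max X"
  obtain v where v: "v \<noteq> 0" "X *v v = l *\<^sub>R v"
    using lambda_max_in_eigvals[OF sX] unfolding eigvals_def l_def by blast
  define u where "u = (1/norm v) *\<^sub>R v"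
  have uu: "u \<bullet> u = 1" using v(1) by (simp add: u_def dot_square_norm power2_eq_square)
  have Xu: "X *v u = l *\<^sub>R u" using v(2) by (simp add: u_def matrix_vector_mult_scaleR)
  have "0 \<le> u \<bullet> (X *v u)" using less.prems by (simp add: psd_def)
  hence l0: "0 \<le> l" using Xu uu by simp
  show ?case
  proof (cases "l = 0")
    case True
    have "X *v w = 0" for w
      using quadratic_form_le_lambda_max[OF sX, of w] less.prems True
      by (intro psd_quadratic_form_eq_0D) (auto simp: psd_def l_def intro: antisym)
    hence "X = 0" by (simp add: matrix_eq)
    thus ?thesis by simp
  next
    case False
    define X' where "X' = X - l *\<^sub>R outer u"
    have X'_mult: "X' *v w = X *v w - (l * (u \<bullet> w)) *\<^sub>R u" for w
      by (simp add: X'_def matrix_vector_mult_diff_rdistrib scaleR_matrix_vector_assoc[symmetric]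
          outer_mult_vec)
    have "{w. X *v w = 0} \<subset> {w. X' *v w = 0}"
    proof
      show "{w. X *v w = 0} \<subseteq> {w. X' *v w = 0}"
        using sym_mat_inner_mult[OF sX, of u] Xu by (auto simp: X'_mult)
      have "X' *v u = 0" "X *v u \<noteq> 0" using Xu uu False by (auto simp: X'_mult)
      thus "{w. X *v w = 0} \<noteq> {w. X' *v w = 0}" by blast
    qed
    hence "dim {w. X *v w = 0} < dim {w. X' *v w = 0}"
      by (intro dim_psubset)
        (simp add: span_eq_iff[THEN iffD2, OF subspace_matrix_kernel])
    moreover have "dim {w. X' *v w = 0} \<le> DIM(real^'n)" by (rule dim_subset_UNIV)
    ultimately have "0 \<le> inner Z X'"
      using psd_deflate[OF less.prems uu Xu] by (intro less.hyps[of X']) (auto simp: X'_def)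
    moreover have "inner Z X = l * (u \<bullet> (Z *v u)) + inner Z X'"
      by (simp add: X'_def inner_diff_right inner_outer)
    moreover have "0 \<le> u \<bullet> (Z *v u)" using Z by (simp add: psd_def)
    ultimately show ?thesis using l0 by simp
  qed
qed

lemma psd_trace_nonneg: "psd X \<Longrightarrow> 0 \<le> trace X"
  using psd_inner_nonneg[OF psd_mat_1, of X] by (simp add: inner_commute inner_mat_1)

lemma inner_psd_ge_neg_part:
  assumes "psd W" "trace W \<le> t" "sym_mat X"
  shows "- (t * neg_part X) \<le> inner W X"
proof -
  have "- (trace W * neg_part X) \<le> inner W X"
    using psd_inner_nonneg[OF assms(1) psd_add_neg_part[OF assms(3)]]
    by (simp add: inner_add_right inner_mat_1 mult.commute)
  moreover have "trace W * neg_part X \<le> t * neg_part X"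
    using assms(2) neg_part_nonneg by (rule mult_right_mono)
  ultimately show ?thesis by linarith
qed

lemma psd_norm_le_trace:
  fixes Y :: "real^'n^'n"
  assumes Y: "psd Y"
  shows "norm Y \<le> trace Y"
proof -
  \<comment> \<open>Pairing \<open>Y\<close> with \<open>l I - Y\<close> and \<open>I - u u\<^sup>T\<close> gives \<open>|Y|^2 \<le> l tr Y \<le> (tr Y)^2\<close>.\<close>
  have sY: "sym_mat Y" using Y by (simp add: psd_def)
  define l where "l = lambda_max Y"
  obtain v where v: "v \<noteq> 0" "Y *v v = l *\<^sub>R v"
    using lambda_max_in_eigvals[OF sY] unfolding eigvals_def l_def by blast
  define u where "u = (1/norm v) *\<^sub>R v"
  have uu: "u \<bullet> u = 1" using v(1) by (simp add: u_def dot_square_norm power2_eq_square)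
  have lu: "u \<bullet> (Y *v u) = l" using v(2) uu by (simp add: u_def matrix_vector_mult_scaleR)
  have "psd (l *\<^sub>R mat 1 - Y)"
    using sY quadratic_form_le_lambda_max[OF sY]
    by (auto simp: psd_def l_def matrix_vector_mult_diff_rdistrib mat_1_scaleR_mult inner_diff_right)
  from psd_inner_nonneg[OF this Y] have "inner Y Y \<le> l * trace Y"
    by (simp add: inner_diff_left inner_commute[of "mat 1"] inner_mat_1)
  moreover have "psd (mat 1 - outer u)"
  proof -
    have "(u \<bullet> w)^2 \<le> (u \<bullet> u) * (w \<bullet> w)" for w by (rule Cauchy_Schwarz_ineq)
    thus ?thesis
      using uu sym_mat_outer[of u] by (auto simp: psd_def matrix_vector_mult_diff_rdistrib outer_mult_vec
          inner_diff_right power2_eq_square inner_commute)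
  qed
  from psd_inner_nonneg[OF Y this] have "l \<le> trace Y"
    using lu by (simp add: inner_diff_right inner_outer inner_mat_1)
  moreover have "0 \<le> l" using Y lu by (metis psd_def)
  ultimately have "inner Y Y \<le> (trace Y)^2"
    by (metis mult_right_mono order_trans power2_eq_square psd_trace_nonneg[OF Y])
  thus ?thesis using psd_trace_nonneg[OF Y] by (simp add: norm_le_square)
qed

lemma norm_le_trace_shift:
  fixes X :: "real^'n^'n"
  assumes "psd (X + m *\<^sub>R mat 1)" "0 \<le> m"
  shows "norm X \<le> trace (X + m *\<^sub>R mat 1) + m * norm (mat 1 :: real^'n^'n)"
proof -
  have "norm X \<le> norm (X + m *\<^sub>R mat 1) + norm (m *\<^sub>R (mat 1 :: real^'n^'n))"
    using norm_triangle_ineq4[of "X + m *\<^sub>R mat 1" "m *\<^sub>R mat 1"] by simp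
  thus ?thesis using psd_norm_le_trace[OF assms(1)] assms(2) by simp
qed

lemma psd_if_pd: "pd X \<Longrightarrow> psd X"
  unfolding pd_def psd_def by (metis inner_zero_left less_imp_le order_refl)

lemma pd_coercive:
  fixes X :: "real^'n^'n"
  assumes "pd X"
  shows "\<exists>\<mu>>0. \<forall>v. \<mu> * (v \<bullet> v) \<le> v \<bullet> (X *v v)"
proof -
  obtain v where v: "norm v = 1" "\<forall>w. w \<bullet> ((- X) *v w) \<le> (v \<bullet> ((- X) *v v)) * (w \<bullet> w)"
    using quadratic_form_max_on_sphere by blast
  have "v \<noteq> 0" using v(1) by auto
  hence "0 < v \<bullet> (X *v v)" using assms by (simp add: pd_def)
  moreover have "(v \<bullet> (X *v v)) * (w \<bullet> w) \<le> w \<bullet> (X *v w)" for w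
    using v(2) by (simp add: uminus_matrix_vector_mult)
  ultimately show ?thesis by blast
qed

lemma pd_inner_ge_trace:
  fixes Z :: "real^'n^'n"
  assumes "pd Z"
  shows "\<exists>\<mu>>0. \<forall>Y. psd Y \<longrightarrow> \<mu> * trace Y \<le> inner Z Y"
proof -
  obtain \<mu> where \<mu>: "\<mu> > 0" "\<forall>v. \<mu> * (v \<bullet> v) \<le> v \<bullet> (Z *v v)"
    using pd_coercive[OF assms] by blast
  have "psd (Z - \<mu> *\<^sub>R mat 1)"
    using assms \<mu>(2) by (auto simp: psd_def pd_def matrix_vector_mult_diff_rdistrib
        mat_1_scaleR_mult inner_diff_right)
  hence "\<mu> * trace Y \<le> inner Z Y" if "psd Y" for Y
    using psd_inner_nonneg[OF _ that] by (fastforce simp: inner_diff_left inner_commute[of "mat 1"] inner_mat_1)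
  thus ?thesis using \<mu>(1) by blast
qed

section \<open>Duality for the semidefinite program\<close>

lemma linear_opAadj: "linear (opAadj A)"
  by (rule linearI) (simp_all add: opAadj_def scaleR_add_left sum.distrib scaleR_sum_right)

lemma opAadj_axis: "opAadj A (axis i 1) = A i"
proof -
  have "opAadj A (axis i 1) = (\<Sum>j\<in>UNIV. if j = i then A j else 0)"
    unfolding opAadj_def by (rule sum.cong) (auto simp: axis_def)
  thus ?thesis by simp
qed

context
  fixes A :: "'m::finite \<Rightarrow> real^'n^'n"
  assumes sym_A: "\<forall>i. sym_mat (A i)"
begin

lemma opA_nth: "opA A X $ i = inner (A i) X"
  using sym_A by (simp add: opA_def frob_commute[of "A i"] frob_eq_inner inner_commute)

lemma linear_opA: "linear (opA A)"
  by (rule linearI) (simp_all add: vec_eq_iff opA_nth inner_add_right)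

lemma inner_opAadj: "inner (opAadj A y) X = y \<bullet> opA A X"
  by (simp add: opAadj_def inner_sum_left inner_vec_def[of y] opA_nth)

lemma sym_mat_opAadj: "sym_mat (opAadj A y)"
  unfolding opAadj_def using sym_A by (intro sym_mat_sum) auto

lemma inner_eq_dual_slack:
  assumes "Z + opAadj A y = C" "opA A X = b"
  shows "inner C X = inner Z X + b \<bullet> y"
  using assms by (metis inner_add_left inner_commute inner_opAadj)

lemma weak_duality:
  assumes "psd Z" "Z + opAadj A y = C" "psd X" "opA A X = b"
  shows "b \<bullet> y \<le> inner C X"
  using inner_eq_dual_slack[OF assms(2,4)] psd_inner_nonneg[OF assms(1,3)] by simp

lemma primal_slater_trace_bound:
  assumes "opA A Xh = b" "pd Xh"
  obtains \<mu> where "\<mu> > 0" "\<And>y Z. psd Z \<Longrightarrow> Z + opAadj A y = C \<Longrightarrow> \<mu> * trace Z \<le> inner C Xh - b \<bullet> y"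
proof -
  obtain \<mu> where \<mu>: "\<mu> > 0" "\<forall>Z. psd Z \<longrightarrow> \<mu> * trace Z \<le> inner Xh Z"
    using pd_inner_ge_trace[OF assms(2)] by blast
  have "\<mu> * trace Z \<le> inner C Xh - b \<bullet> y" if "psd Z" "Z + opAadj A y = C" for y Z
  proof -
    have "inner C Xh = inner Z Xh + b \<bullet> y" by (rule inner_eq_dual_slack[OF that(2) assms(1)])
    moreover have "\<mu> * trace Z \<le> inner Xh Z" using \<mu>(2) that(1) by blast
    ultimately show ?thesis by (simp add: inner_commute)
  qed
  thus thesis using \<mu>(1) that by blast
qed

lemma separating_multiplier:
  assumes lower: "\<And>X. psd X \<Longrightarrow> opA A X = b \<Longrightarrow> p \<le> inner C X"
  obtains a1 a0 where "(a1, a0) \<noteq> 0" "0 \<le> a0"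
    "\<And>X. psd X \<Longrightarrow> 0 \<le> a1 \<bullet> (opA A X - b) + a0 * (inner C X - p)"
proof -
  \<comment> \<open>Separate the attainable pairs (constraint residual, excess cost) from \<open>{0} \<times> (-\<infinity>, 0)\<close>.\<close>
  define K1 where
    "K1 = {(opA A X - b, t) | X t. psd X \<and> inner C X - p \<le> t}"
  define K2 :: "((real^'m) \<times> real) set" where "K2 = (\<lambda>t. (0, t)) ` {..<0}"
  have "convex K2" unfolding K2_def
    by (rule convex_linear_image) (auto intro: linearI)
  moreover have "convex K1" unfolding convex_def
  proof (intro ballI allI impI)
    fix x y and u v :: real
    assume "x \<in> K1" "y \<in> K1" and uv: "0 \<le> u" "0 \<le> v" "u + v = 1"
    then obtain X1 t1 X2 t2 where x: "psd X1" "inner C X1 - p \<le> t1" "x = (opA A X1 - b, t1)"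
      and y: "psd X2" "inner C X2 - p \<le> t2" "y = (opA A X2 - b, t2)"
      unfolding K1_def by blast
    define X where "X = u *\<^sub>R X1 + v *\<^sub>R X2"
    have "psd X" unfolding X_def using x y uv by auto
    moreover have "inner C X - p = u * (inner C X1 - p) + v * (inner C X2 - p)"
      using uv by (simp add: X_def algebra_simps flip: distrib_left)
    hence "inner C X - p \<le> u * t1 + v * t2"
      using x y uv by (auto intro: add_mono mult_left_mono)
    moreover have "opA A X - b = u *\<^sub>R (opA A X1 - b) + v *\<^sub>R (opA A X2 - b)"
      using uv by (simp add: X_def linear_add[OF linear_opA] linear_scale[OF linear_opA]
          algebra_simps flip: scaleR_add_left)
    ultimately show "u *\<^sub>R x + v *\<^sub>R y \<in> K1" unfolding K1_def using x(3) y(3) by force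
  qed
  moreover have "K2 \<noteq> {}" "K1 \<noteq> {}" unfolding K1_def K2_def by auto
  moreover have "K2 \<inter> K1 = {}"
    using lower by (fastforce simp: K1_def K2_def)
  ultimately obtain a c where ac: "a \<noteq> 0" "\<forall>x\<in>K2. inner a x \<le> c" "\<forall>x\<in>K1. c \<le> inner a x"
    using separating_hyperplane_sets by metis
  obtain a1 a0 where a: "a = (a1, a0)" by fastforce
  have K2_bound: "a0 * t \<le> c" if "t < 0" for t
    using ac(2) that unfolding K2_def a by auto
  have "0 \<le> a0"
  proof (rule ccontr)
    assume "\<not> 0 \<le> a0"
    hence "(\<bar>c\<bar> + 1) / a0 < 0" by (simp add: divide_pos_neg)
    from K2_bound[OF this] show False using \<open>\<not> 0 \<le> a0\<close> by simp
  qed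
  have "0 \<le> c"
  proof (rule ccontr)
    assume "\<not> 0 \<le> c"
    hence "c / (2 * a0 + 1) < 0" using \<open>0 \<le> a0\<close> by (simp add: divide_neg_pos)
    from K2_bound[OF this] show False
      using \<open>\<not> 0 \<le> c\<close> \<open>0 \<le> a0\<close> mult_nonneg_nonpos[of a0 c] by (simp add: field_simps)
  qed
  have "c \<le> a1 \<bullet> (opA A X - b) + a0 * (inner C X - p)" if "psd X" for X
    using ac(3) that unfolding K1_def a by fastforce
  hence "0 \<le> a1 \<bullet> (opA A X - b) + a0 * (inner C X - p)" if "psd X" for X
    using that \<open>0 \<le> c\<close> by (meson order_trans)
  moreover have "(a1, a0) \<noteq> 0" using ac(1) a by simp
  ultimately show thesis using \<open>0 \<le> a0\<close> by (intro that)
qed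

lemma multiplier_eq_0_if_slater:
  assumes A1: "assumption1 A" and Xh: "opA A Xh = b" "pd Xh"
    and a1: "\<And>X. psd X \<Longrightarrow> 0 \<le> a1 \<bullet> (opA A X - b)"
  shows "a1 = 0"
proof -
  \<comment> \<open>\<open>Xh - s D\<close> stays psd for small \<open>s > 0\<close>, and testing it gives \<open>- s |D|^2 \<ge> 0\<close>.\<close>
  define D where "D = opAadj A a1"
  define K where "K = neg_part (- D)"
  obtain \<mu> where \<mu>: "\<mu> > 0" "\<And>v. \<mu> * (v \<bullet> v) \<le> v \<bullet> (Xh *v v)"
    using pd_coercive[OF Xh(2)] by blast
  define s where "s = \<mu> / (K + 1)"
  have "0 \<le> K" by (simp add: K_def neg_part_nonneg)
  hence s: "0 < s" "s * K \<le> \<mu>" using \<mu>(1) by (auto simp: s_def field_simps)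
  have sym_D: "sym_mat D" by (simp add: D_def sym_mat_opAadj)
  have "psd (Xh - s *\<^sub>R D)"
  proof -
    have "s * (w \<bullet> (D *v w)) \<le> w \<bullet> (Xh *v w)" for w
    proof -
      have "s * (w \<bullet> (D *v w)) \<le> s * (K * (w \<bullet> w))"
        using quadratic_form_ge_neg_part[of "- D" w] sym_D s(1)
        by (intro mult_left_mono) (auto simp: K_def uminus_matrix_vector_mult)
      also have "\<dots> \<le> \<mu> * (w \<bullet> w)" using s(2) by (simp add: mult.assoc[symmetric] mult_right_mono)
      finally show ?thesis using \<mu>(2)[of w] by linarith
    qed
    moreover have "sym_mat Xh" using Xh(2) by (simp add: pd_def)
    ultimately show ?thesis
      using sym_D by (auto simp: psd_def matrix_vector_mult_diff_rdistrib
          scaleR_matrix_vector_assoc[symmetric] inner_diff_right)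
  qed
  from a1[OF this] have "0 \<le> - s * inner D D"
    using Xh(1) by (simp add: linear_diff[OF linear_opA] linear_scale[OF linear_opA]
        inner_opAadj[symmetric] D_def)
  hence "inner D D \<le> 0" using s(1) by (simp add: mult_le_0_iff)
  hence "D = 0" by (metis inner_gt_zero_iff not_le)
  thus ?thesis using A1 by (simp add: assumption1_def D_def)
qed

lemma psd_if_inner_psd_bounded_below:
  fixes Z :: "real^'n^'n"
  assumes "sym_mat Z" and bdd: "\<And>X. psd X \<Longrightarrow> 0 \<le> inner Z X + r"
  shows "psd Z"
  unfolding psd_def
proof (intro conjI allI)
  show "sym_mat Z" by fact
  fix v :: "real^'n"
  show "0 \<le> v \<bullet> (Z *v v)"
  proof (rule ccontr)
    assume neg: "\<not> 0 \<le> v \<bullet> (Z *v v)"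
    define s where "s = (\<bar>r\<bar> + 1) / - (v \<bullet> (Z *v v))"
    have "0 < s" unfolding s_def using neg by (intro divide_pos_pos) auto
    hence "0 \<le> inner Z (s *\<^sub>R outer v) + r" by (intro bdd psd_scaleR psd_outer) simp
    also have "inner Z (s *\<^sub>R outer v) = - (\<bar>r\<bar> + 1)"
      using neg by (simp add: inner_outer s_def)
    finally show False by simp
  qed
qed

lemma lagrange_multiplier_exists:
  assumes A1: "assumption1 A" and Xh: "opA A Xh = b" "pd Xh"
    and lower: "\<And>X. psd X \<Longrightarrow> opA A X = b \<Longrightarrow> p \<le> inner C X"
  obtains y where "\<And>X. psd X \<Longrightarrow> 0 \<le> inner (C - opAadj A y) X + (b \<bullet> y - p)"
proof -
  obtain a1 a0 where a: "(a1, a0) \<noteq> 0" "0 \<le> a0"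
    and sep: "\<And>X. psd X \<Longrightarrow> 0 \<le> a1 \<bullet> (opA A X - b) + a0 * (inner C X - p)"
    using separating_multiplier[OF lower] by metis
  have "a0 \<noteq> 0"
  proof
    assume "a0 = 0"
    hence "a1 = 0" using sep by (intro multiplier_eq_0_if_slater[OF A1 Xh]) simp
    thus False using a(1) \<open>a0 = 0\<close> by (simp add: zero_prod_def)
  qed
  hence a0: "0 < a0" using a(2) by simp
  define y where "y = (- 1 / a0) *\<^sub>R a1"
  have "0 \<le> inner (C - opAadj A y) X + (b \<bullet> y - p)" if "psd X" for X
  proof -
    have "0 \<le> (a1 \<bullet> (opA A X - b) + a0 * (inner C X - p)) / a0" using sep[OF that] a0 by simp
    also have "\<dots> = inner (C - opAadj A y) X + (b \<bullet> y - p)"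
    proof -
      have "inner (opAadj A y) X = - (a1 \<bullet> opA A X) / a0" "b \<bullet> y = - (a1 \<bullet> b) / a0"
        by (simp add: inner_opAadj y_def, simp add: y_def inner_commute)
      thus ?thesis using a0 by (simp add: inner_diff_left inner_diff_right field_simps)
    qed
    finally show ?thesis .
  qed
  thus thesis by (rule that)
qed

lemma bdd_above_dual_opt_trace:
  assumes "assumption2 A b C"
  shows "bdd_above ((\<lambda>(y, Z). trace Z) ` dual_opt A b C)"
proof (cases "dual_opt A b C = {}")
  case False
  then obtain y0 Z0 where opt0: "(y0, Z0) \<in> dual_opt A b C" by auto
  obtain Xh where Xh: "opA A Xh = b" "pd Xh" using assms by (auto simp: assumption2_def)
  obtain \<mu> where \<mu>: "\<mu> > 0"
    "\<And>y Z. psd Z \<Longrightarrow> Z + opAadj A y = C \<Longrightarrow> \<mu> * trace Z \<le> inner C Xh - b \<bullet> y"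
    using primal_slater_trace_bound[OF Xh] by metis
  show ?thesis
  proof (rule bdd_aboveI2)
    fix yz assume "yz \<in> dual_opt A b C"
    then obtain y Z where yz: "yz = (y, Z)" "psd Z" "Z + opAadj A y = C" "b \<bullet> y0 \<le> b \<bullet> y"
      using opt0 by (cases yz) (auto simp: dual_opt_def dual_feas_def)
    hence "\<mu> * trace Z \<le> inner C Xh - b \<bullet> y0" using \<mu>(2)[OF yz(2,3)] by linarith
    thus "(case yz of (y, Z) \<Rightarrow> trace Z) \<le> (inner C Xh - b \<bullet> y0) / \<mu>"
      using \<mu>(1) yz(1) by (simp add: field_simps)
  qed
qed simp

lemma strong_duality:
  assumes sym_C: "sym_mat C" and A1: "assumption1 A" and A2: "assumption2 A b C"
    and Xs: "Xs \<in> primal_opt A b C"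
  obtains y Z where "psd Z" "Z + opAadj A y = C" "b \<bullet> y = inner C Xs" "trace Z \<le> DZstar A b C"
proof -
  define p where "p = inner C Xs"
  have Xs_feas: "psd Xs" "opA A Xs = b" using Xs by (auto simp: primal_opt_def primal_feas_def)
  have lower: "p \<le> inner C X" if "psd X" "opA A X = b" for X
    using Xs that sym_C
    by (auto simp: primal_opt_def primal_feas_def p_def frob_commute[of C] frob_eq_inner inner_commute)
  obtain Xh where Xh: "opA A Xh = b" "pd Xh" using A2 by (auto simp: assumption2_def)
  obtain y where lag: "\<And>X. psd X \<Longrightarrow> 0 \<le> inner (C - opAadj A y) X + (b \<bullet> y - p)"
    using lagrange_multiplier_exists[OF A1 Xh lower] by metis
  define Z where "Z = C - opAadj A y"
  have Z: "psd Z" "Z + opAadj A y = C"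
    using sym_C sym_mat_opAadj lag[folded Z_def]
    by (auto simp: Z_def intro: psd_if_inner_psd_bounded_below)
  have "b \<bullet> y = p"
    using lag[OF psd_zero] weak_duality[OF Z Xs_feas] by (simp add: p_def)
  moreover have "(y, Z) \<in> dual_opt A b C"
    using Z weak_duality[OF _ _ Xs_feas] \<open>b \<bullet> y = p\<close>
    by (auto simp: dual_opt_def dual_feas_def p_def)
  hence "trace Z \<le> DZstar A b C"
    unfolding DZstar_def by (intro cSup_upper bdd_above_dual_opt_trace[OF A2]) force
  ultimately show thesis using Z by (intro that) (auto simp: p_def)
qed

lemma exact_penalty:
  assumes sym_C: "sym_mat C" and Z: "psd Z" "Z + opAadj A y = C" and X: "X \<in> X0 A b"
  shows "b \<bullet> y + (\<rho> - trace Z) * neg_part X \<le> Fpen C \<rho> X"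
proof -
  have X': "sym_mat X" "opA A X = b" using X by (auto simp: X0_def)
  from inner_eq_dual_slack[OF Z(2) X'(2)] show ?thesis
    using inner_psd_ge_neg_part[OF Z(1) order_refl X'(1)] by (simp add: Fpen_eq[OF sym_C] algebra_simps)
qed

lemma bounded_sublevel_Fpen:
  assumes sym_C: "sym_mat C" and A2: "assumption2 A b C"
    and Z: "psd Z" "Z + opAadj A y = C" "trace Z < \<rho>"
  shows "bounded {X \<in> X0 A b. Fpen C \<rho> X \<le> c}"
proof -
  obtain yh Zh where Zh: "Zh + opAadj A yh = C" "pd Zh" using A2 by (auto simp: assumption2_def)
  obtain \<mu> where \<mu>: "\<mu> > 0" "\<forall>Y. psd Y \<longrightarrow> \<mu> * trace Y \<le> inner Zh Y"
    using pd_inner_ge_trace[OF Zh(2)] by blast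
  have \<rho>: "0 < \<rho>" using psd_trace_nonneg[OF Z(1)] Z(3) by linarith
  define M where "M = (c - b \<bullet> y) / (\<rho> - trace Z)"
  define R where "R = c - yh \<bullet> b + M * trace Zh"
  have "norm X \<le> R / \<mu> + M * norm (mat 1 :: real^'n^'n)" if X: "X \<in> X0 A b" "Fpen C \<rho> X \<le> c" for X
  proof -
    define m where "m = neg_part X"
    have X': "sym_mat X" "opA A X = b" using X(1) by (auto simp: X0_def)
    have "m \<le> M"
      using exact_penalty[OF sym_C Z(1,2) X(1), of \<rho>] X(2) Z(3)
      by (simp add: M_def m_def field_simps)
    define Y where "Y = X + m *\<^sub>R mat 1"
    have Y: "psd Y" unfolding Y_def m_def by (rule psd_add_neg_part[OF X'(1)])
    have "\<mu> * trace Y \<le> inner Zh Y" using \<mu>(2) Y by blast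
    also have "\<dots> = inner C X - yh \<bullet> b + m * trace Zh"
      using inner_eq_dual_slack[OF Zh(1) X'(2)] by (simp add: Y_def inner_add_right inner_mat_1 inner_commute[of yh b])
    also have "\<dots> \<le> R"
    proof -
      have "inner C X \<le> c"
        using X(2) \<rho> neg_part_nonneg[of X] by (simp add: Fpen_eq[OF sym_C]) (smt (verit) mult_nonneg_nonneg)
      moreover have "m * trace Zh \<le> M * trace Zh"
        using \<open>m \<le> M\<close> psd_trace_nonneg[OF psd_if_pd[OF Zh(2)]] by (rule mult_right_mono)
      ultimately show ?thesis by (simp add: R_def)
    qed
    finally have "trace Y \<le> R / \<mu>" using \<mu>(1) by (simp add: field_simps)
    moreover have "m * norm (mat 1 :: real^'n^'n) \<le> M * norm (mat 1 :: real^'n^'n)"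
      using \<open>m \<le> M\<close> by (rule mult_right_mono) simp
    ultimately show ?thesis
      using norm_le_trace_shift[OF Y[unfolded Y_def]] neg_part_nonneg[of X] by (simp add: m_def Y_def)
  qed
  thus ?thesis unfolding bounded_iff by blast
qed

end

lemma
  assumes "psd Wb" "trace Wb = 1" "transpose P ** P = mat 1" "W \<in> What \<rho> Wb P"
  shows psd_if_What: "psd W" and trace_le_if_What: "trace W \<le> \<rho>"
proof -
  obtain \<gamma> S where W: "W = \<gamma> *\<^sub>R Wb + P ** S ** transpose P" "psd S" "\<gamma> \<ge> 0" "\<gamma> + trace S \<le> \<rho>"
    using assms(4) unfolding What_def by blast
  show "psd W" using W assms(1) psd_congruence[OF W(2)] by auto
  show "trace W \<le> \<rho>"
    using W assms(2) trace_orthonormal_congruence[OF assms(3)] by (simp add: trace_add trace_scaleR)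
qed

lemma zero_in_What: "0 \<le> \<rho> \<Longrightarrow> 0 \<in> What \<rho> Wb P"
  unfolding What_def by (rule CollectI, rule exI[of _ 0], rule exI[of _ 0]) (simp add: trace_def psd_zero)

lemma convex_What: "convex (What \<rho> Wb P)"
  unfolding convex_def
proof (intro ballI allI impI)
  fix W1 W2 and u v :: real
  assume "W1 \<in> What \<rho> Wb P" "W2 \<in> What \<rho> Wb P" and uv: "0 \<le> u" "0 \<le> v" "u + v = 1"
  then obtain g1 S1 g2 S2
    where W1: "W1 = g1 *\<^sub>R Wb + P ** S1 ** transpose P" "psd S1" "g1 \<ge> 0" "g1 + trace S1 \<le> \<rho>"
      and W2: "W2 = g2 *\<^sub>R Wb + P ** S2 ** transpose P" "psd S2" "g2 \<ge> 0" "g2 + trace S2 \<le> \<rho>"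
    unfolding What_def by blast
  define S where "S = u *\<^sub>R S1 + v *\<^sub>R S2"
  have "P ** S ** transpose P = u *\<^sub>R (P ** S1 ** transpose P) + v *\<^sub>R (P ** S2 ** transpose P)"
    by (simp add: S_def matrix_add_ldistrib matrix_add_rdistrib matrix_scalar_ac scalar_matrix_assoc)
  hence "u *\<^sub>R W1 + v *\<^sub>R W2 = (u * g1 + v * g2) *\<^sub>R Wb + P ** S ** transpose P"
    by (simp add: W1(1) W2(1) algebra_simps)
  moreover have "psd S" unfolding S_def using W1 W2 uv by auto
  moreover have "(u * g1 + v * g2) + trace S \<le> u * \<rho> + v * \<rho>"
    using W1 W2 uv mult_left_mono[of "g1 + trace S1" \<rho> u] mult_left_mono[of "g2 + trace S2" \<rho> v]
    by (simp add: S_def trace_add trace_scaleR algebra_simps)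
  hence "(u * g1 + v * g2) + trace S \<le> \<rho>" using uv(3) by (simp flip: distrib_right)
  moreover have "0 \<le> u * g1 + v * g2" using W1(3) W2(3) uv by simp
  ultimately show "u *\<^sub>R W1 + v *\<^sub>R W2 \<in> What \<rho> Wb P" unfolding What_def by blast
qed

section \<open>One step of the spectral bundle method\<close>

locale bundle_step =
  fixes A :: "'m::finite \<Rightarrow> real^'n^'n" and b :: "real^'m" and C :: "real^'n^'n"
    and \<rho> \<alpha> \<beta> :: real and Wb \<Omega>t Wstar :: "real^'n^'n" and P :: "real^'r^'n"
    and ystar :: "real^'m"
  assumes sym_A: "\<forall>i. sym_mat (A i)" and sym_C: "sym_mat C"
    and alpha: "\<alpha> > 0" and beta: "0 < \<beta>" "\<beta> \<le> 1"
    and \<Omega>t: "\<Omega>t \<in> X0 A b"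
    and Wb: "psd Wb" "trace Wb = 1" and P: "transpose P ** P = mat 1"
    and Wstar: "Wstar \<in> What \<rho> Wb P"
    and minimizer: "\<forall>W \<in> What \<rho> Wb P. \<forall>y. subobj A b C \<alpha> \<Omega>t Wstar ystar \<le> subobj A b C \<alpha> \<Omega>t W y"
    and descent: "\<beta> * (Fpen C \<rho> \<Omega>t - Fhat C \<rho> Wb P (\<Omega>t + (1/\<alpha>) *\<^sub>R (Wstar - C + opAadj A ystar)))
        \<le> Fpen C \<rho> \<Omega>t - Fpen C \<rho> (\<Omega>t + (1/\<alpha>) *\<^sub>R (Wstar - C + opAadj A ystar))"
begin

definition residual :: "real^'n^'n" where
  "residual = Wstar - C + opAadj A ystar"

definition next_iterate :: "real^'n^'n" where
  "next_iterate = \<Omega>t + (1/\<alpha>) *\<^sub>R residual"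

lemma psd_Wstar: "psd Wstar" and trace_Wstar_le: "trace Wstar \<le> \<rho>"
  using psd_if_What trace_le_if_What Wb P Wstar by auto

lemma sym_next_iterate: "sym_mat next_iterate"
proof -
  have "sym_mat residual"
    using psd_Wstar sym_C sym_mat_opAadj[OF sym_A] by (auto simp: residual_def psd_def)
  thus ?thesis using \<Omega>t by (auto simp: next_iterate_def X0_def)
qed

lemma subobj_eq:
  "subobj A b C \<alpha> \<Omega>t W y = inner (W - C) \<Omega>t + (norm (W - C + opAadj A y))^2 / (2 * \<alpha>)"
  using \<Omega>t by (simp add: subobj_def X0_def frob_eq_inner fnorm_eq_norm)

lemma opA_residual: "opA A residual = 0"
proof -
  have "inner residual (A i) = 0" for i
  proof (rule linear_coeff_eq_0_if_quadratic_nonneg[where c = "inner (A i) (A i)"])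
    fix t :: real
    have "subobj A b C \<alpha> \<Omega>t Wstar ystar \<le> subobj A b C \<alpha> \<Omega>t Wstar (ystar + t *\<^sub>R axis i 1)"
      using minimizer Wstar by blast
    hence "norm residual \<le> norm (residual + t *\<^sub>R A i)"
      using alpha by (simp add: subobj_eq residual_def linear_add[OF linear_opAadj]
          linear_scale[OF linear_opAadj] opAadj_axis algebra_simps divide_le_cancel)
    thus "0 \<le> 2 * t * inner residual (A i) + t^2 * inner (A i) (A i)"
      unfolding norm_le
      by (simp add: inner_commute power2_eq_square algebra_simps)
  qed simp
  thus ?thesis using sym_A by (simp add: vec_eq_iff opA_nth inner_commute)
qed

lemma next_iterate_feasible: "next_iterate \<in> X0 A b"
  using \<Omega>t sym_next_iterate opA_residual
  by (simp add: X0_def next_iterate_def linear_add[OF linear_opA[OF sym_A]]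
      linear_scale[OF linear_opA[OF sym_A]])

lemma variational_ineq:
  assumes W: "W \<in> What \<rho> Wb P"
  shows "0 \<le> inner (W - Wstar) next_iterate"
proof -
  define D where "D = W - Wstar"
  have "0 \<le> inner D \<Omega>t + inner residual D / \<alpha>"
  proof (rule linear_coeff_nonneg_if_quadratic_nonneg_near_0[where c = "inner D D / (2 * \<alpha>)"])
    show "0 \<le> inner D D / (2 * \<alpha>)" using alpha by simp
    fix s :: real assume s: "0 < s" "s \<le> 1"
    have "(1 - s) *\<^sub>R Wstar + s *\<^sub>R W \<in> What \<rho> Wb P"
      using convex_What[unfolded convex_alt, rule_format, OF Wstar W, of s] s by simp
    moreover have "(1 - s) *\<^sub>R Wstar + s *\<^sub>R W = Wstar + s *\<^sub>R D" by (simp add: D_def algebra_simps)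
    ultimately have "subobj A b C \<alpha> \<Omega>t Wstar ystar \<le> subobj A b C \<alpha> \<Omega>t (Wstar + s *\<^sub>R D) ystar"
      using minimizer by auto
    hence "(norm residual)^2 / (2 * \<alpha>) \<le> s * inner D \<Omega>t + (norm (residual + s *\<^sub>R D))^2 / (2 * \<alpha>)"
      by (simp add: subobj_eq residual_def algebra_simps)
    also have "(norm (residual + s *\<^sub>R D))^2 = (norm residual)^2 + 2 * s * inner residual D + s^2 * inner D D"
      unfolding power2_norm_eq_inner
      by (simp add: inner_commute power2_eq_square algebra_simps)
    finally show "0 \<le> s * (inner D \<Omega>t + inner residual D / \<alpha>) + s^2 * (inner D D / (2 * \<alpha>))"
      using alpha by (simp add: field_simps)
  qed
  thus ?thesis by (simp add: D_def next_iterate_def inner_add_right inner_commute)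
qed

lemma Fhat_next_iterate:
  "Fhat C \<rho> Wb P next_iterate = inner C next_iterate - inner Wstar next_iterate"
proof -
  have frob_next: "frob W (- next_iterate) = - inner W next_iterate" for W
    using sym_next_iterate by (simp add: frob_eq_inner sym_mat_uminus)
  have "Sup ((\<lambda>W. frob W (- next_iterate)) ` What \<rho> Wb P) = - inner Wstar next_iterate"
    unfolding frob_next
  proof (rule cSup_eq_maximum)
    show "- inner Wstar next_iterate \<in> (\<lambda>W. - inner W next_iterate) ` What \<rho> Wb P"
      using Wstar by blast
    show "x \<le> - inner Wstar next_iterate" if "x \<in> (\<lambda>W. - inner W next_iterate) ` What \<rho> Wb P" for x
      using that variational_ineq by (auto simp: inner_diff_left)
  qed
  thus ?thesis
    using sym_next_iterate sym_C by (simp add: Fhat_def frob_commute[of C] frob_eq_inner inner_commute)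
qed

lemma model_decrease: "(norm residual)^2 / \<alpha> \<le> Fpen C \<rho> \<Omega>t - Fhat C \<rho> Wb P next_iterate"
proof -
  have "- (\<rho> * neg_part \<Omega>t) \<le> inner Wstar \<Omega>t"
    using \<Omega>t psd_Wstar trace_Wstar_le by (intro inner_psd_ge_neg_part) (auto simp: X0_def)
  hence "inner C \<Omega>t - inner Wstar \<Omega>t \<le> Fpen C \<rho> \<Omega>t" by (simp add: Fpen_eq[OF sym_C])
  moreover have "inner (opAadj A ystar) residual = 0"
    by (simp add: inner_opAadj[OF sym_A] opA_residual)
  hence "inner (Wstar - C) residual = (norm residual)^2"
    by (simp add: power2_norm_eq_inner residual_def inner_add_left inner_diff_left)
  hence "inner C \<Omega>t - inner Wstar \<Omega>t - (inner C next_iterate - inner Wstar next_iterate)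
      = (norm residual)^2 / \<alpha>"
    by (simp add: next_iterate_def algebra_simps)
  ultimately show ?thesis unfolding Fhat_next_iterate by linarith
qed

lemma sufficient_decrease: "\<beta> * ((norm residual)^2 / \<alpha>) \<le> Fpen C \<rho> \<Omega>t - Fpen C \<rho> next_iterate"
proof -
  have "\<beta> * ((norm residual)^2 / \<alpha>) \<le> \<beta> * (Fpen C \<rho> \<Omega>t - Fhat C \<rho> Wb P next_iterate)"
    using model_decrease beta by (intro mult_left_mono) auto
  also have "\<dots> \<le> Fpen C \<rho> \<Omega>t - Fpen C \<rho> next_iterate"
    using descent by (simp add: next_iterate_def residual_def)
  finally show ?thesis .
qed

lemma dual_value_next_iterate:
  "frob C next_iterate - b \<bullet> ystar = inner Wstar next_iterate - inner residual next_iterate"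
proof -
  have "b \<bullet> ystar = inner (opAadj A ystar) next_iterate"
    using next_iterate_feasible by (simp add: inner_opAadj[OF sym_A] X0_def inner_commute)
  thus ?thesis
    using sym_C by (simp add: frob_commute[of C] frob_eq_inner sym_next_iterate inner_commute
        residual_def inner_add_left inner_diff_left)
qed

lemma inner_Wstar_next_iterate:
  shows "- (\<rho> * neg_part next_iterate) \<le> inner Wstar next_iterate"
    and "inner Wstar next_iterate \<le> 0"
proof -
  show "- (\<rho> * neg_part next_iterate) \<le> inner Wstar next_iterate"
    using psd_Wstar trace_Wstar_le sym_next_iterate by (rule inner_psd_ge_neg_part)
  have "0 \<le> \<rho>" using psd_trace_nonneg[OF psd_Wstar] trace_Wstar_le by linarith
  thus "inner Wstar next_iterate \<le> 0"
    using variational_ineq[OF zero_in_What] by (simp add: inner_diff_left)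
qed

lemma step_estimates:
  fixes p \<kappa> D :: real
  assumes penalty: "\<And>X. X \<in> X0 A b \<Longrightarrow> p + \<kappa> * neg_part X \<le> Fpen C \<rho> X" and \<kappa>: "0 < \<kappa>"
    and level: "\<And>X. X \<in> X0 A b \<Longrightarrow> Fpen C \<rho> X \<le> Fpen C \<rho> \<Omega>t \<Longrightarrow> norm X \<le> D"
  defines "e \<equiv> Fpen C \<rho> \<Omega>t - p"
  shows "- e / \<kappa> \<le> lambda_min next_iterate"
    and "(norm residual)^2 \<le> (2 * \<alpha> / \<beta>) * e"
    and "- (\<rho> * e) / \<kappa> - D * sqrt ((2 * \<alpha> / \<beta>) * e) \<le> frob C next_iterate - b \<bullet> ystar"
    and "frob C next_iterate - b \<bullet> ystar \<le> ((1 - \<beta>) / \<beta>) * e + D * sqrt ((2 * \<alpha> / \<beta>) * e)"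
proof -
  let ?d = "\<beta> * ((norm residual)^2 / \<alpha>)"
  have d: "0 \<le> ?d" using alpha beta by simp
  have pen: "p + \<kappa> * neg_part next_iterate \<le> Fpen C \<rho> next_iterate"
    by (rule penalty[OF next_iterate_feasible])
  have neg: "\<kappa> * neg_part next_iterate \<le> e" and "?d \<le> e"
    using sufficient_decrease pen d \<kappa> neg_part_nonneg[of next_iterate] unfolding e_def
    by (smt (verit) mult_nonneg_nonneg)+
  hence e: "0 \<le> e" using d by linarith
  have neg': "neg_part next_iterate \<le> e / \<kappa>" using neg \<kappa> by (simp add: field_simps)
  thus "- e / \<kappa> \<le> lambda_min next_iterate"
    using lambda_min_ge_neg_part[OF sym_next_iterate] by simp
  have "(norm residual)^2 \<le> (\<alpha> / \<beta>) * e"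
    using \<open>?d \<le> e\<close> alpha beta by (simp add: field_simps)
  also have "\<dots> \<le> (2 * \<alpha> / \<beta>) * e" using e alpha beta by (intro mult_right_mono) (auto simp: field_simps)
  finally show res: "(norm residual)^2 \<le> (2 * \<alpha> / \<beta>) * e" .
  have "norm next_iterate \<le> D"
    using level[OF next_iterate_feasible] sufficient_decrease d by linarith
  hence "\<bar>inner residual next_iterate\<bar> \<le> sqrt ((2 * \<alpha> / \<beta>) * e) * D"
    using Cauchy_Schwarz_ineq2[of residual next_iterate] real_le_rsqrt[OF res]
    by (meson mult_mono norm_ge_zero order_trans)
  moreover have "- (\<rho> * e) / \<kappa> \<le> inner Wstar next_iterate"
  proof -
    have "0 \<le> \<rho>" using psd_trace_nonneg[OF psd_Wstar] trace_Wstar_le by linarith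
    with neg' have "\<rho> * neg_part next_iterate \<le> \<rho> * (e / \<kappa>)" by (rule mult_left_mono)
    thus ?thesis using inner_Wstar_next_iterate(1) by simp
  qed
  moreover have "0 \<le> ((1 - \<beta>) / \<beta>) * e" using beta e by simp
  ultimately show "- (\<rho> * e) / \<kappa> - D * sqrt ((2 * \<alpha> / \<beta>) * e) \<le> frob C next_iterate - b \<bullet> ystar"
    and "frob C next_iterate - b \<bullet> ystar \<le> ((1 - \<beta>) / \<beta>) * e + D * sqrt ((2 * \<alpha> / \<beta>) * e)"
    using inner_Wstar_next_iterate(2) unfolding dual_value_next_iterate by (auto simp: abs_le_iff mult.commute)
qed

end

theorem lemma4p4:
  fixes A :: "'m::finite \<Rightarrow> real^'n^'n" and b :: "real^'m" and C :: "real^'n^'n"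
    and \<rho> \<alpha> \<beta> :: real
    and \<Omega>0 \<Omega>t Wb Wstar Xstar :: "real^'n^'n" and P :: "real^'r^'n" and ystar :: "real^'m"
  assumes symA: "\<forall>i. sym_mat (A i)" and symC: "sym_mat C"
    and A1: "assumption1 A" and A2: "assumption2 A b C"
    and rho: "\<rho> > 2 * DZstar A b C + 1" and alpha: "\<alpha> > 0" and beta: "0 < \<beta>" "\<beta> < 1"
    and O0: "\<Omega>0 \<in> X0 A b" and Ot: "\<Omega>t \<in> X0 A b"
    and Fle: "Fpen C \<rho> \<Omega>t \<le> Fpen C \<rho> \<Omega>0"
    and Wb: "psd Wb" "trace Wb = 1"
    and Pt: "transpose P ** P = mat 1"
    and Wmem: "Wstar \<in> What \<rho> Wb P"
    and minim: "\<forall>W \<in> What \<rho> Wb P. \<forall>y. subobj A b C \<alpha> \<Omega>t Wstar ystar \<le> subobj A b C \<alpha> \<Omega>t W y"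
    and descent: "\<beta> * (Fpen C \<rho> \<Omega>t - Fhat C \<rho> Wb P (\<Omega>t + (1/\<alpha>) *\<^sub>R (Wstar - C + opAadj A ystar)))
        \<le> Fpen C \<rho> \<Omega>t - Fpen C \<rho> (\<Omega>t + (1/\<alpha>) *\<^sub>R (Wstar - C + opAadj A ystar))"
    and Xs: "Xstar \<in> primal_opt A b C"
  shows "let \<Omega>1 = \<Omega>t + (1/\<alpha>) *\<^sub>R (Wstar - C + opAadj A ystar);
             e = Fpen C \<rho> \<Omega>t - Fpen C \<rho> Xstar;
             DZ = DZstar A b C;
             DO = DOmega A b C \<rho> \<Omega>0
         in (opA A \<Omega>1 = b \<and> lambda_min \<Omega>1 \<ge> - e / (DZ + 1))
          \<and> (psd Wstar \<and> (fnorm (Wstar - C + opAadj A ystar))^2 \<le> (2 * \<alpha> / \<beta>) * e)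
          \<and> (- (\<rho> * e) / (DZ + 1) - DO * sqrt ((2 * \<alpha> / \<beta>) * e) \<le> frob C \<Omega>1 - b \<bullet> ystar
             \<and> frob C \<Omega>1 - b \<bullet> ystar \<le> ((1 - \<beta>) / \<beta>) * e + DO * sqrt ((2 * \<alpha> / \<beta>) * e))"
proof -
  interpret bundle_step A b C \<rho> \<alpha> \<beta> Wb \<Omega>t Wstar P ystar
    using symA symC alpha beta Ot Wb Pt Wmem minim descent by unfold_locales auto
  obtain y Z where Z: "psd Z" "Z + opAadj A y = C" "b \<bullet> y = inner C Xstar" "trace Z \<le> DZstar A b C"
    using strong_duality[OF symA symC A1 A2 Xs] by metis
  have trace_Z: "0 \<le> trace Z" "trace Z < \<rho>" using psd_trace_nonneg[OF Z(1)] Z(4) rho by linarith+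
  have "Fpen C \<rho> Xstar = b \<bullet> y"
    using Xs Z(3) symC by (simp add: primal_opt_def primal_feas_def Fpen_eq neg_part_eq_0_if_psd)
  moreover have "b \<bullet> y + (DZstar A b C + 1) * neg_part X \<le> Fpen C \<rho> X" if "X \<in> X0 A b" for X
    using exact_penalty[OF symA symC Z(1,2) that, of \<rho>] Z(4) rho neg_part_nonneg[of X]
    by (smt (verit) mult_right_mono)
  moreover have "norm X \<le> DOmega A b C \<rho> \<Omega>0"
    if "X \<in> X0 A b" "Fpen C \<rho> X \<le> Fpen C \<rho> \<Omega>t" for X
    using that Fle bounded_sublevel_Fpen[OF symA symC A2 Z(1,2) trace_Z(2), of "Fpen C \<rho> \<Omega>0"]
    unfolding DOmega_def fnorm_eq_norm[abs_def] bdd_above_norm[symmetric]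
    by (intro cSup_upper) auto
  moreover have "0 < DZstar A b C + 1" using trace_Z Z(4) by linarith
  ultimately show ?thesis
    using step_estimates[of "b \<bullet> y" "DZstar A b C + 1" "DOmega A b C \<rho> \<Omega>0"]
      next_iterate_feasible psd_Wstar
    unfolding Let_def next_iterate_def residual_def by (auto simp: X0_def fnorm_eq_norm)
qed

end
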